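(* Let $n\geq 3$ be an integer and let $\varepsilon>0$ satisfy $\varepsilon<1/n$ if $n$ is odd, and $\varepsilon<2/n$ if $n$ is even. Assume there exists a real orthogonal $n\times n$ matrix $M=(m_{j,k})$ such that for every $j,k=1,\dots,n$, $$\left(\frac{1-\varepsilon}{n}\right)^{1/2}\leq |m_{j,k}|\leq \left(\frac{1+\varepsilon}{n}\right)^{1/2}.$$ Then $n$ is a multiple of $4$ and there exists a Hadamard matrix of order $n$.
   Context: A Hadamard matrix of order $n$ is an $n\times n$ matrix with entries in $\{+1,-1\}$ whose rows are pairwise orthogonal. *)

theory Defs
  imports Complex_Main
begin

(* n x n real matrices represented as functions nat => nat => real, entries indexed by {0..<n} *)

definition orthogonal_mat :: "nat \<Rightarrow> (nat \<Rightarrow> nat \<Rightarrow> real) \<Rightarrow> bool" where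
  "orthogonal_mat n M \<longleftrightarrow>
     (\<forall>j<n. \<forall>k<n. (\<Sum>l<n. M j l * M k l) = (if j = k then 1 else 0))"

definition hadamard_mat :: "nat \<Rightarrow> (nat \<Rightarrow> nat \<Rightarrow> real) \<Rightarrow> bool" where
  "hadamard_mat n H \<longleftrightarrow>
     (\<forall>j<n. \<forall>k<n. H j k = 1 \<or> H j k = -1) \<and>
     (\<forall>j<n. \<forall>k<n. j \<noteq> k \<longrightarrow> (\<Sum>l<n. H j l * H k l) = 0)"

end

theory Submission
  imports Defs
begin

text \<open>
  Take H to be the entrywise sign of M. For two distinct rows, orthogonality of M together with
  the flatness bounds gives |\<Sum>l. H j l * H k l| \<le> \<epsilon>n, while this sum of n signs is
  congruent to n modulo 2. The bound on \<epsilon> therefore excludes odd n and forces the sum to vanish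
  for even n, so H is a Hadamard matrix; the classical three-row count then shows 4 | n.
\<close>

lemma sum_plus_minus_one:
  fixes f :: "'a \<Rightarrow> 'b::ring_1"
  assumes "finite A" and "\<And>x. x \<in> A \<Longrightarrow> f x = 1 \<or> f x = -1"
  shows "(\<Sum>x\<in>A. f x) = of_nat (card A) - 2 * of_nat (card {x\<in>A. f x = -1})"
proof -
  let ?N = "{x\<in>A. f x = -1}"
  have "(\<Sum>x\<in>A. f x) = (\<Sum>x\<in>A - ?N. f x) + (\<Sum>x\<in>?N. f x)"
    using assms(1) by (intro sum.subset_diff) auto
  also have "(\<Sum>x\<in>A - ?N. f x) = of_nat (card (A - ?N))"
    using assms(2) by (subst sum.cong[of _ _ _ "\<lambda>_. 1"]) auto
  also have "(\<Sum>x\<in>?N. f x) = - of_nat (card ?N)"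
    by simp
  also have "card (A - ?N) = card A - card ?N"
    using assms(1) by (intro card_Diff_subset) auto
  also have "card ?N \<le> card A"
    using assms(1) by (intro card_mono) auto
  ultimately show ?thesis by (simp add: of_nat_diff mult_2)
qed

lemma sum_zero_or_const:
  fixes f :: "'a \<Rightarrow> 'b::semiring_1"
  assumes "finite A" and "\<And>x. x \<in> A \<Longrightarrow> f x = 0 \<or> f x = c"
  shows "(\<Sum>x\<in>A. f x) = of_nat (card {x\<in>A. f x = c}) * c"
proof -
  have "(\<Sum>x\<in>A. f x) = (\<Sum>x\<in>{x\<in>A. f x = c}. f x)"
    using assms by (intro sum.mono_neutral_right) auto
  then show ?thesis by simp
qed

lemma abs_sum_sgn_mult_le:
  fixes u v :: "nat \<Rightarrow> real"
  assumes "(\<Sum>l<n. u l * v l) = 0"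
    and "\<And>l. l < n \<Longrightarrow> \<bar>\<bar>u l\<bar> * \<bar>v l\<bar> - c\<bar> \<le> \<delta>"
  shows "\<bar>c\<bar> * \<bar>\<Sum>l<n. sgn (u l) * sgn (v l)\<bar> \<le> real n * \<delta>"
proof -
  let ?s = "\<lambda>l. sgn (u l) * sgn (v l)"
  \<comment> \<open>Orthogonality turns c * \<Sum>l. s l into \<Sum>l. s l * (c - |u l| * |v l|), a sum of small terms.\<close>
  have uv: "u l * v l = ?s l * (\<bar>u l\<bar> * \<bar>v l\<bar>)" for l
    by (metis mult.assoc mult.left_commute sgn_mult_abs)
  have "c * (\<Sum>l<n. ?s l) = (\<Sum>l<n. ?s l * (c - \<bar>u l\<bar> * \<bar>v l\<bar>))"
    using assms(1) by (simp add: uv algebra_simps sum_subtractf sum_distrib_left)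
  then have "\<bar>c\<bar> * \<bar>\<Sum>l<n. ?s l\<bar> = \<bar>\<Sum>l<n. ?s l * (c - \<bar>u l\<bar> * \<bar>v l\<bar>)\<bar>"
    by (simp only: abs_mult[symmetric])
  also have "\<dots> \<le> (\<Sum>l<n. \<bar>?s l * (c - \<bar>u l\<bar> * \<bar>v l\<bar>)\<bar>)"
    by (rule sum_abs)
  also have "\<dots> \<le> (\<Sum>l<n. \<delta>)"
  proof (rule sum_mono)
    fix l assume "l \<in> {..<n}"
    have "\<bar>?s l\<bar> \<le> 1" by (simp add: abs_mult abs_sgn_eq)
    moreover have "\<bar>c - \<bar>u l\<bar> * \<bar>v l\<bar>\<bar> \<le> \<delta>"
      using assms(2) \<open>l \<in> {..<n}\<close> by (simp add: abs_minus_commute)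
    ultimately have "\<bar>?s l\<bar> * \<bar>c - \<bar>u l\<bar> * \<bar>v l\<bar>\<bar> \<le> 1 * \<delta>"
      by (rule mult_mono) simp_all
    then show "\<bar>?s l * (c - \<bar>u l\<bar> * \<bar>v l\<bar>)\<bar> \<le> \<delta>"
      by (simp add: abs_mult)
  qed
  finally show ?thesis by simp
qed

lemma mult_abs_between_sqrt:
  fixes x y a b :: real
  assumes "0 \<le> a"
    and "sqrt a \<le> \<bar>x\<bar>" "\<bar>x\<bar> \<le> sqrt b" "sqrt a \<le> \<bar>y\<bar>" "\<bar>y\<bar> \<le> sqrt b"
  shows "a \<le> \<bar>x\<bar> * \<bar>y\<bar> \<and> \<bar>x\<bar> * \<bar>y\<bar> \<le> b"
proof
  have "sqrt a * sqrt a \<le> \<bar>x\<bar> * \<bar>y\<bar>" using assms by (intro mult_mono) auto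
  then show "a \<le> \<bar>x\<bar> * \<bar>y\<bar>" using assms(1) by simp
  have "0 \<le> sqrt b" using assms(3) abs_ge_zero order_trans by blast
  then have "0 \<le> b" by simp
  have "\<bar>x\<bar> * \<bar>y\<bar> \<le> sqrt b * sqrt b" using assms \<open>0 \<le> sqrt b\<close> by (intro mult_mono) auto
  then show "\<bar>x\<bar> * \<bar>y\<bar> \<le> b" using \<open>0 \<le> b\<close> by simp
qed

lemma even_if_abs_diff_double_less_one:
  fixes n N :: nat
  assumes "\<bar>real n - 2 * real N\<bar> < 1"
  shows "even n"
proof -
  have "\<bar>int n - 2 * int N\<bar> < 1" using assms by linarith
  then show ?thesis by presburger
qed

lemma eq_double_if_even_abs_diff_less_two:
  fixes n N :: nat
  assumes "even n" and "\<bar>real n - 2 * real N\<bar> < 2"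
  shows "n = 2 * N"
proof -
  have "\<bar>int n - 2 * int N\<bar> < 2" using assms(2) by linarith
  then show ?thesis using assms(1) by presburger
qed

lemma hadamard_mat_order_dvd_four:
  assumes "hadamard_mat n H" and "3 \<le> n"
  shows "4 dvd n"
proof -
  have pm: "\<And>j k. j < n \<Longrightarrow> k < n \<Longrightarrow> H j k = 1 \<or> H j k = -1"
    and orth: "\<And>j k. j < n \<Longrightarrow> k < n \<Longrightarrow> j \<noteq> k \<Longrightarrow> (\<Sum>l<n. H j l * H k l) = 0"
    using assms(1) unfolding hadamard_mat_def by auto
  let ?t = "\<lambda>l. (H 0 l + H 1 l) * (H 0 l + H 2 l)"
  have row_0_norm: "(\<Sum>l<n. H 0 l * H 0 l) = (\<Sum>l<n. 1)"
  proof (rule sum.cong)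
    fix l assume "l \<in> {..<n}"
    then have "H 0 l = 1 \<or> H 0 l = -1" using pm assms(2) by simp
    then show "H 0 l * H 0 l = 1" by auto
  qed simp
  have "(\<Sum>l<n. ?t l) = (\<Sum>l<n. H 0 l * H 0 l) + (\<Sum>l<n. H 0 l * H 2 l)
      + (\<Sum>l<n. H 1 l * H 0 l) + (\<Sum>l<n. H 1 l * H 2 l)"
    by (simp add: algebra_simps sum.distrib)
  also have "\<dots> = real n"
    using row_0_norm orth[of 0 2] orth[of 1 0] orth[of 1 2] assms(2) by simp
  finally have sum_t: "(\<Sum>l<n. ?t l) = real n" .
  have "(\<Sum>l<n. ?t l) = real (card {l\<in>{..<n}. ?t l = 4}) * 4"
  proof (rule sum_zero_or_const)
    fix l assume "l \<in> {..<n}"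
    then have "H 0 l = 1 \<or> H 0 l = -1" "H 1 l = 1 \<or> H 1 l = -1" "H 2 l = 1 \<or> H 2 l = -1"
      using pm assms(2) by simp_all
    then show "?t l = 0 \<or> ?t l = 4" by (elim disjE) simp_all
  qed simp
  then have "real n = real (4 * card {l\<in>{..<n}. ?t l = 4})"
    unfolding sum_t by (simp add: mult.commute)
  then have "n = 4 * card {l\<in>{..<n}. ?t l = 4}"
    by (simp only: of_nat_eq_iff)
  then show ?thesis by (rule dvdI)
qed

definition flat_mat :: "nat \<Rightarrow> real \<Rightarrow> (nat \<Rightarrow> nat \<Rightarrow> real) \<Rightarrow> bool" where
  "flat_mat n \<epsilon> M \<longleftrightarrow>
     (\<forall>j<n. \<forall>k<n. sqrt ((1 - \<epsilon>) / real n) \<le> \<bar>M j k\<bar> \<and> \<bar>M j k\<bar> \<le> sqrt ((1 + \<epsilon>) / real n))"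

lemma flat_mat_sgn_entry:
  assumes "flat_mat n \<epsilon> M" and "\<epsilon> < 1" and "j < n" "k < n"
  shows "sgn (M j k) = 1 \<or> sgn (M j k) = -1"
proof -
  have "0 < sqrt ((1 - \<epsilon>) / real n)" using assms(2,3) by simp
  moreover have "sqrt ((1 - \<epsilon>) / real n) \<le> \<bar>M j k\<bar>"
    using assms(1,3,4) unfolding flat_mat_def by blast
  ultimately have "M j k \<noteq> 0" by auto
  then show ?thesis by (simp add: sgn_if)
qed

lemma flat_orthogonal_sign_correlation:
  assumes "orthogonal_mat n M" and "flat_mat n \<epsilon> M" and "\<epsilon> \<le> 1"
    and "j < n" "k < n" "j \<noteq> k"
  shows "\<bar>\<Sum>l<n. sgn (M j l) * sgn (M k l)\<bar> \<le> \<epsilon> * real n"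
proof -
  have n: "real n > 0" using \<open>j < n\<close> by simp
  have "\<bar>\<bar>M j l\<bar> * \<bar>M k l\<bar> - 1 / real n\<bar> \<le> \<epsilon> / real n" if "l < n" for l
  proof -
    have "(1 - \<epsilon>) / real n \<le> \<bar>M j l\<bar> * \<bar>M k l\<bar> \<and> \<bar>M j l\<bar> * \<bar>M k l\<bar> \<le> (1 + \<epsilon>) / real n"
      using assms(2-5) that n unfolding flat_mat_def by (intro mult_abs_between_sqrt) auto
    then show ?thesis by (simp add: abs_le_iff diff_divide_distrib add_divide_distrib)
  qed
  moreover have "(\<Sum>l<n. M j l * M k l) = 0"
    using assms(1,4-6) unfolding orthogonal_mat_def by simp
  ultimately have "\<bar>1 / real n\<bar> * \<bar>\<Sum>l<n. sgn (M j l) * sgn (M k l)\<bar> \<le> real n * (\<epsilon> / real n)"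
    by (intro abs_sum_sgn_mult_le)
  then show ?thesis using n by (simp add: field_simps)
qed

lemma flat_orthogonal_sign_inner:
  assumes "orthogonal_mat n M" and "flat_mat n \<epsilon> M" and "\<epsilon> < 1"
    and "j < n" "k < n" "j \<noteq> k"
  obtains N :: nat where "(\<Sum>l<n. sgn (M j l) * sgn (M k l)) = real n - 2 * real N"
    and "\<bar>real n - 2 * real N\<bar> \<le> \<epsilon> * real n"
proof -
  have "sgn (M j l) * sgn (M k l) = 1 \<or> sgn (M j l) * sgn (M k l) = -1" if "l \<in> {..<n}" for l
    using flat_mat_sgn_entry[OF assms(2,3) assms(4), of l] flat_mat_sgn_entry[OF assms(2,3) assms(5), of l]
      that by auto
  from sum_plus_minus_one[of "{..<n}" "\<lambda>l. sgn (M j l) * sgn (M k l)", OF _ this]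
  have "(\<Sum>l<n. sgn (M j l) * sgn (M k l))
      = real n - 2 * real (card {l\<in>{..<n}. sgn (M j l) * sgn (M k l) = -1})" by simp
  with flat_orthogonal_sign_correlation[OF assms(1,2) _ assms(4-6)] assms(3) that show ?thesis
    by fastforce
qed

lemma hadamard_mat_sgn_if_flat_orthogonal:
  assumes "orthogonal_mat n M" and "flat_mat n \<epsilon> M" and "2 \<le> n"
    and "\<epsilon> * real n < 2" and "odd n \<Longrightarrow> \<epsilon> * real n < 1"
  shows "hadamard_mat n (\<lambda>j k. sgn (M j k))"
  unfolding hadamard_mat_def
proof (intro conjI allI impI)
  have "\<epsilon> < 1"
  proof (rule ccontr)
    assume "\<not> \<epsilon> < 1"
    then have "1 * real n \<le> \<epsilon> * real n" by (intro mult_right_mono) auto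
    with assms(3,4) show False by linarith
  qed
  note sign_inner = flat_orthogonal_sign_inner[OF assms(1,2) \<open>\<epsilon> < 1\<close>]
  have "even n"
  proof (rule ccontr)
    assume "odd n"
    obtain N where "\<bar>real n - 2 * real N\<bar> \<le> \<epsilon> * real n"
      using sign_inner[of 0 1] assms(3) by auto
    with assms(5)[OF \<open>odd n\<close>] have "\<bar>real n - 2 * real N\<bar> < 1" by linarith
    then have "even n" by (rule even_if_abs_diff_double_less_one)
    with \<open>odd n\<close> show False by simp
  qed
  fix j k assume "j < n" "k < n"
  then show "sgn (M j k) = 1 \<or> sgn (M j k) = -1" by (rule flat_mat_sgn_entry[OF assms(2) \<open>\<epsilon> < 1\<close>])
  assume "j \<noteq> k"
  with \<open>j < n\<close> \<open>k < n\<close> obtain N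
    where sum: "(\<Sum>l<n. sgn (M j l) * sgn (M k l)) = real n - 2 * real N"
      and "\<bar>real n - 2 * real N\<bar> \<le> \<epsilon> * real n" by (rule sign_inner)
  with assms(4) have "\<bar>real n - 2 * real N\<bar> < 2" by linarith
  with \<open>even n\<close> have "n = 2 * N" by (rule eq_double_if_even_abs_diff_less_two)
  with sum show "(\<Sum>l<n. sgn (M j l) * sgn (M k l)) = 0" by simp
qed

theorem proposition2p1:
  fixes n :: nat and \<epsilon> :: real and M :: "nat \<Rightarrow> nat \<Rightarrow> real"
  assumes "n \<ge> 3"
    and "\<epsilon> > 0"
    and "odd n \<Longrightarrow> \<epsilon> < 1 / real n"
    and "even n \<Longrightarrow> \<epsilon> < 2 / real n"
    and "orthogonal_mat n M"
    and "\<And>j k. j < n \<Longrightarrow> k < n \<Longrightarrow>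
           sqrt ((1 - \<epsilon>) / real n) \<le> \<bar>M j k\<bar> \<and> \<bar>M j k\<bar> \<le> sqrt ((1 + \<epsilon>) / real n)"
  shows "4 dvd n \<and> (\<exists>H. hadamard_mat n H)"
proof -
  have flat: "flat_mat n \<epsilon> M" using assms(6) unfolding flat_mat_def by blast
  have n: "real n \<ge> 3" using assms(1) by simp
  have \<epsilon>n_odd: "\<epsilon> * real n < 1" if "odd n" using assms(3)[OF that] n by (simp add: field_simps)
  have "\<epsilon> * real n < 2" if "even n" using assms(4)[OF that] n by (simp add: field_simps)
  with \<epsilon>n_odd have "\<epsilon> * real n < 2" by fastforce
  with assms(1) have "hadamard_mat n (\<lambda>j k. sgn (M j k))"
    by (intro hadamard_mat_sgn_if_flat_orthogonal[OF assms(5) flat _ _ \<epsilon>n_odd]) simp_all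
  then show ?thesis using hadamard_mat_order_dvd_four assms(1) by blast
qed

end
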